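(* Let $N\ge2$, $r>0$ and $0<\alpha\le r^{-1}$. Then \[ \int_0^r t(1-\alpha t)^{N-1}\,dt\ \le\ \frac{N}{N+1}\left(\int_0^r(1-\alpha t)^{N-1}\,dt\right)^2, \] with equality if and only if $\alpha=r^{-1}$. *)

theory Defs
  imports "HOL-Analysis.Analysis"
begin

end

theory Submission
  imports Defs
begin

text \<open>With \<open>s = 1 - \<alpha> r\<close>, both integrals are elementary:
  \<open>(1 - s\<^sup>N) / (\<alpha> N)\<close> and \<open>((1 - s\<^sup>N) / N - (1 - s\<^bsup>N+1\<^esup>) / (N + 1)) / \<alpha>\<^sup>2\<close>.
  The right-hand side minus the left-hand side is then
  \<open>s\<^sup>N (s\<^sup>N - 1 - N (s - 1)) / (\<alpha>\<^sup>2 N (N + 1))\<close>, whose second factor is positive by the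
  strict Bernoulli inequality. Hence the gap vanishes exactly when \<open>s = 0\<close>, i.e. \<open>\<alpha> = 1 / r\<close>.\<close>

lemma Bernoulli_inequality_strict:
  fixes x :: "'a :: linordered_field"
  assumes "-1 \<le> x" "x \<noteq> 0" "n \<ge> 2"
  shows "1 + of_nat n * x < (1 + x) ^ n"
proof -
  obtain m where n: "n = Suc m" and "m \<ge> 1"
    using assms(3) by (cases n) auto
  have "1 + of_nat n * x < 1 + of_nat n * x + of_nat m * x\<^sup>2"
    using \<open>m \<ge> 1\<close> assms(2) by simp
  also have "\<dots> = (1 + x) * (1 + of_nat m * x)"
    by (simp add: n power2_eq_square algebra_simps)
  also have "\<dots> \<le> (1 + x) * (1 + x) ^ m"
    using assms(1) by (intro mult_left_mono Bernoulli_inequality) simp_all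
  finally show ?thesis
    by (simp add: n)
qed

lemma has_integral_power_affine:
  fixes \<alpha> r :: real
  assumes "\<alpha> \<noteq> 0" "0 \<le> r"
  shows "((\<lambda>t. (1 - \<alpha> * t) ^ n) has_integral (1 - (1 - \<alpha> * r) ^ Suc n) / (\<alpha> * Suc n)) {0..r}"
proof -
  let ?F = "\<lambda>t. - ((1 - \<alpha> * t) ^ Suc n) / (\<alpha> * Suc n)"
  have "(?F has_real_derivative (1 - \<alpha> * t) ^ n) (at t within {0..r})" for t
    using assms(1) by (auto intro!: derivative_eq_intros simp del: of_nat_Suc power_Suc)
  then have "((\<lambda>t. (1 - \<alpha> * t) ^ n) has_integral ?F r - ?F 0) {0..r}"
    using assms(2)
    by (intro fundamental_theorem_of_calculus) (simp_all add: has_real_derivative_iff_has_vector_derivative)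
  then show ?thesis
    by (simp add: diff_divide_distrib)
qed

lemma has_integral_mult_power_affine:
  fixes \<alpha> r :: real
  assumes "\<alpha> \<noteq> 0" "0 \<le> r"
  shows "((\<lambda>t. t * (1 - \<alpha> * t) ^ n) has_integral
           ((1 - (1 - \<alpha> * r) ^ Suc n) / Suc n - (1 - (1 - \<alpha> * r) ^ Suc (Suc n)) / Suc (Suc n)) / \<alpha>\<^sup>2)
           {0..r}"
proof -
  have integrand: "(\<lambda>t. t * (1 - \<alpha> * t) ^ n) = (\<lambda>t. ((1 - \<alpha> * t) ^ n - (1 - \<alpha> * t) ^ Suc n) / \<alpha>)"
    using assms(1) by (simp add: field_simps)
  have integral_value: "((1 - (1 - \<alpha> * r) ^ Suc n) / (\<alpha> * Suc n)
      - (1 - (1 - \<alpha> * r) ^ Suc (Suc n)) / (\<alpha> * Suc (Suc n))) / \<alpha>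
    = ((1 - (1 - \<alpha> * r) ^ Suc n) / Suc n - (1 - (1 - \<alpha> * r) ^ Suc (Suc n)) / Suc (Suc n)) / \<alpha>\<^sup>2"
    by (simp add: power2_eq_square diff_divide_distrib ac_simps del: of_nat_Suc power_Suc)
  show ?thesis
    unfolding integrand integral_value[symmetric]
    using assms by (intro has_integral_divide has_integral_diff has_integral_power_affine)
qed

lemma moment_gap_identity:
  fixes a x s A :: "'a :: field"
  assumes "a \<noteq> 0" "x \<noteq> 0" "x + 1 \<noteq> 0"
  shows "x / (x + 1) * ((1 - A) / (a * x))\<^sup>2 - ((1 - A) / x - (1 - s * A) / (x + 1)) / a\<^sup>2
         = A * (A - 1 - x * (s - 1)) / (a\<^sup>2 * x * (x + 1))"
  using assms by (simp add: divide_simps) (simp add: algebra_simps power2_eq_square)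

theorem lemma2p10:
  fixes N :: nat and r \<alpha> :: real
  assumes "N \<ge> 2" and "r > 0" and "\<alpha> > 0" and "\<alpha> \<le> 1 / r"
  shows "integral {0..r} (\<lambda>t. t * (1 - \<alpha> * t) ^ (N - 1))
           \<le> real N / (real N + 1) * (integral {0..r} (\<lambda>t. (1 - \<alpha> * t) ^ (N - 1)))\<^sup>2
         \<and> (integral {0..r} (\<lambda>t. t * (1 - \<alpha> * t) ^ (N - 1))
              = real N / (real N + 1) * (integral {0..r} (\<lambda>t. (1 - \<alpha> * t) ^ (N - 1)))\<^sup>2
            \<longleftrightarrow> \<alpha> = 1 / r)"
proof -
  define s where "s = 1 - \<alpha> * r"
  have "\<alpha> * r \<le> 1"
    using assms by (simp add: field_simps)
  then have s: "0 \<le> s" "s \<noteq> 1"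
    using assms by (simp_all add: s_def)
  have N: "Suc (N - 1) = N" "Suc (Suc (N - 1)) = N + 1"
    using assms(1) by simp_all
  have I0: "integral {0..r} (\<lambda>t. (1 - \<alpha> * t) ^ (N - 1)) = (1 - s ^ N) / (\<alpha> * N)"
    using has_integral_power_affine[of \<alpha> r "N - 1"] assms by (simp add: N s_def integral_unique)
  have I1: "integral {0..r} (\<lambda>t. t * (1 - \<alpha> * t) ^ (N - 1))
      = ((1 - s ^ N) / N - (1 - s * s ^ N) / (real N + 1)) / \<alpha>\<^sup>2"
    using has_integral_mult_power_affine[of \<alpha> r "N - 1"] assms
    by (simp add: N s_def integral_unique del: of_nat_Suc)
  have gap: "real N / (real N + 1) * ((1 - s ^ N) / (\<alpha> * N))\<^sup>2
      - ((1 - s ^ N) / N - (1 - s * s ^ N) / (real N + 1)) / \<alpha>\<^sup>2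
      = s ^ N * (s ^ N - 1 - N * (s - 1)) / (\<alpha>\<^sup>2 * N * (real N + 1))"
    using assms by (intro moment_gap_identity) auto
  have "1 + N * (s - 1) < s ^ N"
    using Bernoulli_inequality_strict[of "s - 1" N] s assms(1) by simp
  then have "s ^ N * (s ^ N - 1 - N * (s - 1)) / (\<alpha>\<^sup>2 * N * (real N + 1)) \<ge> 0"
    and "s ^ N * (s ^ N - 1 - N * (s - 1)) / (\<alpha>\<^sup>2 * N * (real N + 1)) = 0 \<longleftrightarrow> s = 0"
    using s assms by auto
  moreover have "s = 0 \<longleftrightarrow> \<alpha> = 1 / r"
    using assms(2) by (auto simp: s_def field_simps)
  ultimately show ?thesis
    unfolding I0 I1 using gap by linarith
qed

end
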